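(* Let $S$ be a semigroup and $T$ a finite semigroup with $T^2=T$. If $S$ is $U(\mathrm{CF})$ then $S\times T$ is $U(\mathrm{CF})$; if $S$ is $U(\mathrm{DCF})$ then $S\times T$ is $U(\mathrm{DCF})$.
   Context: For a semigroup $S$ generated by a finite set $A$, $\mathrm{WP}(S,A)=\{u\#v^{\mathrm{rev}} : u,v\in A^+,\ u=_S v\}$, where $\#\notin A$ and $v^{\mathrm{rev}}$ is the reversal of $v$. A semigroup is $U(\mathrm{CF})$ (resp. $U(\mathrm{DCF})$) if it is finitely generated and its word problem with respect to some (equivalently any) finite generating set is context-free (resp. deterministic context-free). A semigroup $T$ is decomposable if $T^2=T$. *)

theory Defs
  imports "HOL-Algebra.Group"
begin

section \<open>Semigroups (carrier-based, on HOL-Algebra monoid records; the unit field is ignored)\<close>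

definition semigroup_on :: "('a, 'm) monoid_scheme \<Rightarrow> bool" where
  "semigroup_on G \<longleftrightarrow>
     (\<forall>x\<in>carrier G. \<forall>y\<in>carrier G. x \<otimes>\<^bsub>G\<^esub> y \<in> carrier G) \<and>
     (\<forall>x\<in>carrier G. \<forall>y\<in>carrier G. \<forall>z\<in>carrier G.
        (x \<otimes>\<^bsub>G\<^esub> y) \<otimes>\<^bsub>G\<^esub> z = x \<otimes>\<^bsub>G\<^esub> (y \<otimes>\<^bsub>G\<^esub> z))"

definition decomposable :: "('a, 'm) monoid_scheme \<Rightarrow> bool" where
  "decomposable G \<longleftrightarrow>
     {x \<otimes>\<^bsub>G\<^esub> y | x y. x \<in> carrier G \<and> y \<in> carrier G} = carrier G"

fun wval :: "('a, 'm) monoid_scheme \<Rightarrow> 'a list \<Rightarrow> 'a" where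
  "wval G [] = undefined"
| "wval G (x # xs) = foldl (\<lambda>acc y. acc \<otimes>\<^bsub>G\<^esub> y) x xs"

definition generates :: "('a, 'm) monoid_scheme \<Rightarrow> 'a set \<Rightarrow> bool" where
  "generates G A \<longleftrightarrow> A \<subseteq> carrier G \<and>
     (\<forall>s\<in>carrier G. \<exists>u. u \<noteq> [] \<and> set u \<subseteq> A \<and> wval G u = s)"

text \<open>Word problem WP(S,A) = {u # v^rev : u,v in A^+, u =_S v}; the letter \<open>#\<close>
  is \<open>None\<close>, a generator a is the letter \<open>Some a\<close>.\<close>
definition WP :: "('a, 'm) monoid_scheme \<Rightarrow> 'a set \<Rightarrow> 'a option list set" where
  "WP G A = {map Some u @ [None] @ map Some (rev v) | u v.
               u \<noteq> [] \<and> v \<noteq> [] \<and> set u \<subseteq> A \<and> set v \<subseteq> A \<and> wval G u = wval G v}"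

text \<open>A context-free grammar: finite set of productions with nonterminals in nat,
  right-hand sides are lists of nonterminals (Inl) and terminals (Inr).\<close>
type_synonym 't cfg_rule = "nat \<times> (nat + 't) list"

inductive derives :: "'t cfg_rule set \<Rightarrow> (nat + 't) list \<Rightarrow> (nat + 't) list \<Rightarrow> bool"
  for P where
  refl: "derives P w w"
| step: "derives P u (x @ [Inl A] @ y) \<Longrightarrow> (A, r) \<in> P \<Longrightarrow> derives P u (x @ r @ y)"

definition cfg_lang :: "'t cfg_rule set \<Rightarrow> nat \<Rightarrow> 't list set" where
  "cfg_lang P S = {w. derives P [Inl S] (map Inr w)}"

definition context_free :: "'t list set \<Rightarrow> bool" where
  "context_free L \<longleftrightarrow> (\<exists>P S. finite P \<and> cfg_lang P S = L)"

section \<open>Deterministic context-free languages (DPDA, acceptance by final state)\<close>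

record 't dpda =
  states :: "nat set"
  inputs :: "'t set"
  stack_syms :: "nat set"
  delta :: "nat \<Rightarrow> 't option \<Rightarrow> nat \<Rightarrow> (nat \<times> nat list) option"
  init_state :: nat
  init_stack :: nat
  final :: "nat set"

definition is_dpda :: "'t dpda \<Rightarrow> bool" where
  "is_dpda M \<longleftrightarrow>
     finite (states M) \<and> finite (inputs M) \<and> finite (stack_syms M) \<and>
     init_state M \<in> states M \<and> init_stack M \<in> stack_syms M \<and> final M \<subseteq> states M \<and>
     (\<forall>q a Z p \<gamma>. delta M q a Z = Some (p, \<gamma>) \<longrightarrow>
        q \<in> states M \<and> Z \<in> stack_syms M \<and> (\<forall>b. a = Some b \<longrightarrow> b \<in> inputs M) \<and>
        p \<in> states M \<and> set \<gamma> \<subseteq> stack_syms M) \<and>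
     (\<forall>q Z. delta M q None Z \<noteq> None \<longrightarrow> (\<forall>b. delta M q (Some b) Z = None))"

text \<open>One move on configurations (state, remaining input, stack with top first).\<close>
inductive dpda_step :: "'t dpda \<Rightarrow> nat \<times> 't list \<times> nat list \<Rightarrow> nat \<times> 't list \<times> nat list \<Rightarrow> bool"
  for M where
  eps: "delta M q None Z = Some (p, \<gamma>) \<Longrightarrow> dpda_step M (q, w, Z # \<beta>) (p, w, \<gamma> @ \<beta>)"
| read: "delta M q (Some a) Z = Some (p, \<gamma>) \<Longrightarrow> dpda_step M (q, a # w, Z # \<beta>) (p, w, \<gamma> @ \<beta>)"

definition dpda_lang :: "'t dpda \<Rightarrow> 't list set" where
  "dpda_lang M = {w. \<exists>f \<beta>. f \<in> final M \<and>
      (dpda_step M)\<^sup>*\<^sup>* (init_state M, w, [init_stack M]) (f, [], \<beta>)}"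

definition det_context_free :: "'t list set \<Rightarrow> bool" where
  "det_context_free L \<longleftrightarrow> (\<exists>M. is_dpda M \<and> dpda_lang M = L)"

definition U_CF :: "('a, 'm) monoid_scheme \<Rightarrow> bool" where
  "U_CF G \<longleftrightarrow> (\<exists>A. finite A \<and> generates G A \<and> context_free (WP G A))"

definition U_DCF :: "('a, 'm) monoid_scheme \<Rightarrow> bool" where
  "U_DCF G \<longleftrightarrow> (\<exists>A. finite A \<and> generates G A \<and> det_context_free (WP G A))"

end

theory Submission
  imports Defs "HOL-Library.Nat_Bijection"
begin

text \<open>Take the generating set \<open>A \<times> T\<close> of \<open>S \<times> T\<close>; it generates because \<open>T\<^sup>2 = T\<close> lets every
  element of \<open>T\<close> be written as a product of any prescribed length. A word over \<open>A \<times> T\<close> lies in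
  \<open>WP(S \<times> T, A \<times> T)\<close> iff its projection to \<open>A\<close> lies in \<open>WP(S, A)\<close> and its \<open>T\<close>-components
  multiply to the same value on both sides of \<open>#\<close>; since \<open>T\<close> is finite, the latter condition is
  checked by a finite automaton. Context-free and deterministic context-free languages are closed
  under inverse letter-to-letter homomorphisms intersected with regular languages (the triple
  construction, resp. the product of a DPDA with a DFA), which gives both claims.\<close>

section \<open>Grammars\<close>

inductive yields :: "'t cfg_rule set \<Rightarrow> (nat + 't) list \<Rightarrow> 't list \<Rightarrow> bool" for P where
  nil: "yields P [] []"
| terminal: "yields P xs w \<Longrightarrow> yields P (Inr t # xs) (t # w)"
| variable: "(A, r) \<in> P \<Longrightarrow> yields P r w1 \<Longrightarrow> yields P xs w2 \<Longrightarrow> yields P (Inl A # xs) (w1 @ w2)"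

lemma yields_append_split:
  "yields P (xs @ ys) w \<Longrightarrow> \<exists>w1 w2. w = w1 @ w2 \<and> yields P xs w1 \<and> yields P ys w2"
proof (induction xs arbitrary: w)
  case Nil then show ?case by (auto intro: yields.nil)
next
  case (Cons x xs)
  from Cons.prems show ?case
  proof (cases rule: yields.cases)
    case (terminal xs' w' t)
    with Cons.IH[of w'] obtain a b where "w' = a @ b" "yields P xs a" "yields P ys b" by auto
    with terminal show ?thesis by (intro exI[of _ "t # a"] exI[of _ b]) (auto intro: yields.terminal)
  next
    case (variable A r w1 xs' w2)
    with Cons.IH[of w2] obtain a b where "w2 = a @ b" "yields P xs a" "yields P ys b" by auto
    with variable show ?thesis
      by (intro exI[of _ "w1 @ a"] exI[of _ b]) (auto intro: yields.variable)
  qed auto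
qed

lemma yields_append: "yields P xs w1 \<Longrightarrow> yields P ys w2 \<Longrightarrow> yields P (xs @ ys) (w1 @ w2)"
  by (induction rule: yields.induct) (auto intro: yields.intros)

lemma yields_Nil_iff: "yields P [] w \<longleftrightarrow> w = []"
  by (auto elim: yields.cases intro: yields.nil)

lemma yields_single_Inl_iff: "yields P [Inl A] w \<longleftrightarrow> (\<exists>r. (A, r) \<in> P \<and> yields P r w)"
proof
  show "yields P [Inl A] w \<Longrightarrow> \<exists>r. (A, r) \<in> P \<and> yields P r w"
    by (cases rule: yields.cases) (auto simp: yields_Nil_iff)
  show "\<exists>r. (A, r) \<in> P \<and> yields P r w \<Longrightarrow> yields P [Inl A] w"
    using yields.variable[where xs = "[]", OF _ _ yields.nil] by fastforce
qed

lemma yields_map_Inr: "yields P (map Inr w) w"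
  by (induction w) (auto intro: yields.intros)

lemma derives_trans: "derives P v w \<Longrightarrow> derives P u v \<Longrightarrow> derives P u w"
  by (induction rule: derives.induct) (auto intro: derives.step)

lemma derives_in_context: "derives P u v \<Longrightarrow> derives P (x @ u @ y) (x @ v @ y)"
proof (induction rule: derives.induct)
  case (refl w) then show ?case by (rule derives.refl)
next
  case (step u x' A y' r)
  have "derives P (x @ u @ y) ((x @ x') @ [Inl A] @ (y' @ y))" using step.IH by simp
  from derives.step[OF this step.hyps(2)] show ?case by simp
qed

lemma yields_if_derives: "derives P u v \<Longrightarrow> yields P v w \<Longrightarrow> yields P u w"
proof (induction arbitrary: w rule: derives.induct)
  case refl then show ?case .
next
  case (step u x A y r)
  from yields_append_split[of P x "r @ y" w] step.prems obtain w1 w' where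
    "w = w1 @ w'" "yields P x w1" "yields P (r @ y) w'" by auto
  moreover from this(3) yields_append_split obtain w2 w3 where
    "w' = w2 @ w3" "yields P r w2" "yields P y w3" by blast
  ultimately have "yields P (x @ [Inl A] @ y) w"
    using yields.variable[OF step.hyps(2), of w2 y w3] yields_append by fastforce
  then show ?case using step.IH by blast
qed

lemma derives_if_yields: "yields P xs w \<Longrightarrow> derives P xs (map Inr w)"
proof (induction rule: yields.induct)
  case nil then show ?case by (simp add: derives.refl)
next
  case (terminal xs w t)
  from derives_in_context[OF terminal.IH, of "[Inr t]" "[]"] show ?case by simp
next
  case (variable A r w1 xs w2)
  have "derives P [Inl A] r"
    using derives.step[OF derives.refl[of P "[] @ [Inl A] @ []"] variable.hyps(1)] by simp
  then have "derives P (Inl A # xs) (r @ xs)"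
    using derives_in_context[of P "[Inl A]" r "[]" xs] by simp
  moreover have "derives P (r @ xs) (map Inr w1 @ xs)"
    using derives_in_context[OF variable.IH(1), of "[]" xs] by simp
  moreover have "derives P (map Inr w1 @ xs) (map Inr w1 @ map Inr w2)"
    using derives_in_context[OF variable.IH(2), of "map Inr w1" "[]"] by simp
  ultimately show ?case by (auto intro: derives_trans)
qed

lemma cfg_lang_eq_yields: "cfg_lang P S = {w. yields P [Inl S] w}"
  unfolding cfg_lang_def using derives_if_yields yields_if_derives yields_map_Inr by blast

section \<open>Finite automata with partial transition functions\<close>

fun dfa_run :: "('q \<Rightarrow> 's \<Rightarrow> 'q option) \<Rightarrow> 'q \<Rightarrow> 's list \<Rightarrow> 'q option" where
  "dfa_run \<delta> q [] = Some q"
| "dfa_run \<delta> q (s # w) = (case \<delta> q s of None \<Rightarrow> None | Some q' \<Rightarrow> dfa_run \<delta> q' w)"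

definition dfa_lang :: "('q \<Rightarrow> 's \<Rightarrow> 'q option) \<Rightarrow> 'q \<Rightarrow> 'q set \<Rightarrow> 's list set" where
  "dfa_lang \<delta> q0 F = {w. \<exists>f\<in>F. dfa_run \<delta> q0 w = Some f}"

lemma dfa_run_append:
  "dfa_run \<delta> q (x @ y) = (case dfa_run \<delta> q x of None \<Rightarrow> None | Some q' \<Rightarrow> dfa_run \<delta> q' y)"
  by (induction x arbitrary: q) (auto split: option.splits)

lemma set_subset_if_dfa_run:
  assumes "\<And>r s r'. \<delta> r s = Some r' \<Longrightarrow> s \<in> Sig" and "dfa_run \<delta> r w = Some r'"
  shows "set w \<subseteq> Sig"
  using assms(2) by (induction w arbitrary: r) (auto dest: assms(1) split: option.splits)

inductive mapped_run for \<delta> :: "'q \<Rightarrow> 's \<Rightarrow> 'q option" and h :: "'s \<Rightarrow> 't" where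
  nil: "mapped_run \<delta> h p [] [] p"
| step: "\<delta> p s = Some p' \<Longrightarrow> mapped_run \<delta> h p' w w' q \<Longrightarrow> mapped_run \<delta> h p (h s # w) (s # w') q"

lemma mapped_run_iff: "mapped_run \<delta> h p w w' q \<longleftrightarrow> w = map h w' \<and> dfa_run \<delta> p w' = Some q"
proof
  show "mapped_run \<delta> h p w w' q \<Longrightarrow> w = map h w' \<and> dfa_run \<delta> p w' = Some q"
    by (induction rule: mapped_run.induct) auto
next
  show "w = map h w' \<and> dfa_run \<delta> p w' = Some q \<Longrightarrow> mapped_run \<delta> h p w w' q"
  proof (induction w' arbitrary: p w)
    case Nil then show ?case by (auto intro: mapped_run.intros)
  next
    case (Cons s w')
    then obtain p' where "\<delta> p s = Some p'" "dfa_run \<delta> p' w' = Some q"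
      by (auto split: option.splits)
    with Cons show ?case by (auto intro: mapped_run.intros)
  qed
qed

lemma mapped_run_append_split: "mapped_run \<delta> h p (w1 @ w2) w' q \<Longrightarrow>
   \<exists>w1' w2' p'. w' = w1' @ w2' \<and> mapped_run \<delta> h p w1 w1' p' \<and> mapped_run \<delta> h p' w2 w2' q"
proof (induction w1 arbitrary: p w')
  case Nil then show ?case by (auto intro: mapped_run.intros)
next
  case (Cons t w1)
  from Cons.prems show ?case
  proof (cases rule: mapped_run.cases)
    case (step s p' w w'')
    with Cons.IH[of p' w''] obtain a b p'' where
      "w'' = a @ b" "mapped_run \<delta> h p' w1 a p''" "mapped_run \<delta> h p'' w2 b q" by auto
    with step show ?thesis
      by (intro exI[of _ "s # a"] exI[of _ b] exI[of _ p'']) (auto intro: mapped_run.intros)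
  qed simp
qed

lemma mapped_run_append: "mapped_run \<delta> h p w1 w1' p' \<Longrightarrow> mapped_run \<delta> h p' w2 w2' q \<Longrightarrow>
    mapped_run \<delta> h p (w1 @ w2) (w1' @ w2') q"
  by (induction rule: mapped_run.induct) (auto intro: mapped_run.intros)

lemma mapped_run_closed:
  assumes "\<And>r s r'. \<delta> r s = Some r' \<Longrightarrow> r' \<in> Q"
  shows "mapped_run \<delta> h p w w' q \<Longrightarrow> p \<in> Q \<Longrightarrow> q \<in> Q"
  by (induction rule: mapped_run.induct) (use assms in auto)

section \<open>The triple construction\<close>

text \<open>The variable \<open>triple_nt enc p A q\<close> generates the words \<open>w'\<close>
  that the automaton reads from \<open>p\<close> to \<open>q\<close> such that \<open>map h w'\<close> is generated by \<open>A\<close>;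
  the variable \<open>0\<close> is the new start symbol.\<close>

definition triple_nt :: "('q \<Rightarrow> nat) \<Rightarrow> 'q \<Rightarrow> nat \<Rightarrow> 'q \<Rightarrow> nat" where
  "triple_nt enc p A q = Suc (prod_encode (enc p, prod_encode (A, enc q)))"

inductive triple_rhs for \<delta> :: "'q \<Rightarrow> 's \<Rightarrow> 'q option" and h :: "'s \<Rightarrow> 't" and Q enc where
  nil: "triple_rhs \<delta> h Q enc p [] [] p"
| terminal: "\<delta> p s = Some p' \<Longrightarrow> triple_rhs \<delta> h Q enc p' xs ys q \<Longrightarrow>
    triple_rhs \<delta> h Q enc p (Inr (h s) # xs) (Inr s # ys) q"
| variable: "p \<in> Q \<Longrightarrow> p' \<in> Q \<Longrightarrow> triple_rhs \<delta> h Q enc p' xs ys q \<Longrightarrow>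
    triple_rhs \<delta> h Q enc p (Inl B # xs) (Inl (triple_nt enc p B p') # ys) q"

definition triple_grammar ::
  "'t cfg_rule set \<Rightarrow> nat \<Rightarrow> ('q \<Rightarrow> 's \<Rightarrow> 'q option) \<Rightarrow> ('s \<Rightarrow> 't) \<Rightarrow> 'q set \<Rightarrow> ('q \<Rightarrow> nat) \<Rightarrow>
    'q \<Rightarrow> 'q set \<Rightarrow> 's cfg_rule set" where
  "triple_grammar P S \<delta> h Q enc q0 F =
     {(triple_nt enc p A q, ys) | p A q r ys. (A, r) \<in> P \<and> p \<in> Q \<and> q \<in> Q \<and> triple_rhs \<delta> h Q enc p r ys q}
     \<union> {(0, [Inl (triple_nt enc q0 S f)]) | f. f \<in> F}"

lemma triple_rhs_shape:
  assumes "\<And>r s r'. \<delta> r s = Some r' \<Longrightarrow> s \<in> Sig"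
  shows "triple_rhs \<delta> h Q enc p r ys q \<Longrightarrow> length ys = length r \<and>
    set ys \<subseteq> {Inl (triple_nt enc p B q) | p B q. p \<in> Q \<and> q \<in> Q \<and> Inl B \<in> set r} \<union> Inr ` Sig"
  by (induction rule: triple_rhs.induct) (auto dest: assms, blast+)

context
  fixes P :: "'t cfg_rule set" and S :: nat and \<delta> :: "'q \<Rightarrow> 's \<Rightarrow> 'q option" and h :: "'s \<Rightarrow> 't"
    and Q :: "'q set" and enc :: "'q \<Rightarrow> nat" and q0 :: 'q and F :: "'q set" and Sig :: "'s set"
  assumes finite_P: "finite P" and finite_Q: "finite Q" and finite_Sig: "finite Sig"
    and inj_enc: "inj_on enc Q" and q0: "q0 \<in> Q" and F: "F \<subseteq> Q"
    and \<delta>: "\<And>r s r'. \<delta> r s = Some r' \<Longrightarrow> s \<in> Sig \<and> r' \<in> Q"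
begin

lemma yields_triple_grammar_if_yields:
  "yields P xs w \<Longrightarrow> mapped_run \<delta> h p w w' q \<Longrightarrow> p \<in> Q \<Longrightarrow>
   \<exists>ys. triple_rhs \<delta> h Q enc p xs ys q \<and> yields (triple_grammar P S \<delta> h Q enc q0 F) ys w'"
proof (induction arbitrary: p w' q rule: yields.induct)
  case nil
  then show ?case by (auto elim: mapped_run.cases intro: triple_rhs.intros yields.intros)
next
  case (terminal xs w t)
  from terminal.prems(1) obtain s p' w'' where
    run: "t = h s" "w' = s # w''" "\<delta> p s = Some p'" "mapped_run \<delta> h p' w w'' q"
    by (cases rule: mapped_run.cases) auto
  moreover from run(3) \<delta> have "p' \<in> Q" by blast
  ultimately obtain ys where "triple_rhs \<delta> h Q enc p' xs ys q" "yields (triple_grammar P S \<delta> h Q enc q0 F) ys w''"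
    using terminal.IH by blast
  with run show ?case
    by (intro exI[of _ "Inr s # ys"]) (auto intro: triple_rhs.intros yields.intros)
next
  case (variable A r w1 xs w2)
  from mapped_run_append_split[OF variable.prems(1)] obtain w1' w2' p' where
    split: "w' = w1' @ w2'" "mapped_run \<delta> h p w1 w1' p'" "mapped_run \<delta> h p' w2 w2' q" by blast
  have p': "p' \<in> Q" using mapped_run_closed[OF _ split(2) variable.prems(2)] \<delta> by blast
  from variable.IH(1)[OF split(2) variable.prems(2)] obtain ys1 where
    ys1: "triple_rhs \<delta> h Q enc p r ys1 p'" "yields (triple_grammar P S \<delta> h Q enc q0 F) ys1 w1'" by blast
  from variable.IH(2)[OF split(3) p'] obtain ys2 where
    ys2: "triple_rhs \<delta> h Q enc p' xs ys2 q" "yields (triple_grammar P S \<delta> h Q enc q0 F) ys2 w2'" by blast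
  have "(triple_nt enc p A p', ys1) \<in> triple_grammar P S \<delta> h Q enc q0 F"
    unfolding triple_grammar_def using variable.hyps(1) variable.prems(2) p' ys1(1) by blast
  with ys1 ys2 split(1) variable.prems(2) p' show ?case
    by (intro exI[of _ "Inl (triple_nt enc p A p') # ys2"]) (auto intro: triple_rhs.intros yields.intros)
qed

lemma yields_if_yields_triple_grammar:
  "yields (triple_grammar P S \<delta> h Q enc q0 F) ys w' \<Longrightarrow> triple_rhs \<delta> h Q enc p xs ys q \<Longrightarrow>
   \<exists>w. yields P xs w \<and> mapped_run \<delta> h p w w' q"
proof (induction arbitrary: p xs q rule: yields.induct)
  case nil
  then show ?case by (auto elim: triple_rhs.cases intro: mapped_run.intros yields.intros)
next
  case (terminal ys w s)
  from terminal.prems obtain p' xs' where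
    "xs = Inr (h s) # xs'" "\<delta> p s = Some p'" "triple_rhs \<delta> h Q enc p' xs' ys q"
    by (cases rule: triple_rhs.cases) auto
  moreover from terminal.IH[OF this(3)] obtain w'' where "yields P xs' w''" "mapped_run \<delta> h p' w'' w q"
    by blast
  ultimately show ?case by (intro exI[of _ "h s # w''"]) (auto intro: yields.intros mapped_run.intros)
next
  case (variable n r' w1 ys w2)
  from variable.prems obtain B p' xs' where xs: "xs = Inl B # xs'" "n = triple_nt enc p B p'"
    "p \<in> Q" "p' \<in> Q" "triple_rhs \<delta> h Q enc p' xs' ys q"
    by (cases rule: triple_rhs.cases) auto
  from variable.hyps(1) xs(2) obtain r where r: "(B, r) \<in> P" "triple_rhs \<delta> h Q enc p r r' p'"
    unfolding triple_grammar_def by (auto simp: triple_nt_def inj_on_eq_iff[OF inj_enc] xs(3,4))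
  from variable.IH(1)[OF r(2)] obtain wa where "yields P r wa" "mapped_run \<delta> h p wa w1 p'" by blast
  moreover from variable.IH(2)[OF xs(5)] obtain wb where "yields P xs' wb" "mapped_run \<delta> h p' wb w2 q"
    by blast
  ultimately show ?case using r(1) xs(1) by (auto intro: yields.intros mapped_run_append)
qed

lemma finite_triple_grammar: "finite (triple_grammar P S \<delta> h Q enc q0 F)"
proof -
  define X where "X r = {Inl (triple_nt enc p B q) | p B q. p \<in> Q \<and> q \<in> Q \<and> Inl B \<in> set r} \<union> Inr ` Sig"
    for r :: "(nat + 't) list"
  have "finite (X r)" for r
  proof -
    have "{Inl (triple_nt enc p B q) | p B q. p \<in> Q \<and> q \<in> Q \<and> Inl B \<in> set r} \<subseteq>
      (\<lambda>(p, B, q). Inl (triple_nt enc p B q)) ` (Q \<times> (Inl -` set r) \<times> Q)"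
    proof
      fix x assume "x \<in> {Inl (triple_nt enc p B q) | p B q. p \<in> Q \<and> q \<in> Q \<and> Inl B \<in> set r}"
      then obtain p B q where "x = Inl (triple_nt enc p B q)" "p \<in> Q" "q \<in> Q" "Inl B \<in> set r" by blast
      then show "x \<in> (\<lambda>(p, B, q). Inl (triple_nt enc p B q)) ` (Q \<times> (Inl -` set r) \<times> Q)"
        by (intro rev_image_eqI[of "(p, B, q)"]) auto
    qed
    moreover have "finite (Inl -` set r :: nat set)" by (rule finite_vimageI) auto
    then have "finite (Q \<times> (Inl -` set r :: nat set) \<times> Q)" using finite_Q by auto
    ultimately show ?thesis unfolding X_def using finite_Sig finite_subset by blast
  qed
  define G where "G = (\<Union>(A, r)\<in>P. (\<lambda>(p, q, ys). (triple_nt enc p A q, ys)) `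
    (Q \<times> Q \<times> {ys. set ys \<subseteq> X r \<and> length ys = length r}))"
  have "triple_grammar P S \<delta> h Q enc q0 F \<subseteq> G \<union> (\<lambda>f. (0, [Inl (triple_nt enc q0 S f)])) ` F"
  proof
    fix x assume "x \<in> triple_grammar P S \<delta> h Q enc q0 F"
    then consider (rule) p A q r ys where "x = (triple_nt enc p A q, ys)" "(A, r) \<in> P" "p \<in> Q" "q \<in> Q"
        "triple_rhs \<delta> h Q enc p r ys q"
      | (start) f where "x = (0, [Inl (triple_nt enc q0 S f)])" "f \<in> F"
      unfolding triple_grammar_def by blast
    then show "x \<in> G \<union> (\<lambda>f. (0, [Inl (triple_nt enc q0 S f)])) ` F"
    proof cases
      case rule
      from triple_rhs_shape[of \<delta> Sig, OF _ rule(5)] \<delta>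
      have "ys \<in> {ys. set ys \<subseteq> X r \<and> length ys = length r}" unfolding X_def by blast
      then have "x \<in> (\<lambda>(p, q, ys). (triple_nt enc p A q, ys)) `
          (Q \<times> Q \<times> {ys. set ys \<subseteq> X r \<and> length ys = length r})"
        using rule by (intro rev_image_eqI[of "(p, q, ys)"]) auto
      then show ?thesis unfolding G_def using rule(2) by blast
    qed auto
  qed
  moreover have "finite G" unfolding G_def
    using finite_P finite_Q \<open>finite (X _)\<close> by (auto intro!: finite_lists_length_eq)
  moreover have "finite F" using F finite_Q finite_subset by blast
  ultimately show ?thesis by (meson finite_UnI finite_imageI finite_subset)
qed

lemma triple_grammar_start_rule: "(0, r') \<in> triple_grammar P S \<delta> h Q enc q0 F \<longleftrightarrow> (\<exists>f\<in>F. r' = [Inl (triple_nt enc q0 S f)])"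
  unfolding triple_grammar_def by (auto simp: triple_nt_def)

lemma lang_triple_grammar:
  "{w'. yields (triple_grammar P S \<delta> h Q enc q0 F) [Inl 0] w'} = map h -` {w. yields P [Inl S] w} \<inter> dfa_lang \<delta> q0 F"
proof (intro equalityI subsetI)
  fix w' assume "w' \<in> {w'. yields (triple_grammar P S \<delta> h Q enc q0 F) [Inl 0] w'}"
  then obtain f where f: "f \<in> F" "yields (triple_grammar P S \<delta> h Q enc q0 F) [Inl (triple_nt enc q0 S f)] w'"
    by (auto simp: yields_single_Inl_iff triple_grammar_start_rule)
  have "triple_rhs \<delta> h Q enc q0 [Inl S] [Inl (triple_nt enc q0 S f)] f"
    using q0 f(1) F by (auto intro: triple_rhs.intros)
  from yields_if_yields_triple_grammar[OF f(2) this] f(1)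
  show "w' \<in> map h -` {w. yields P [Inl S] w} \<inter> dfa_lang \<delta> q0 F"
    by (auto simp: mapped_run_iff dfa_lang_def)
next
  fix w' assume "w' \<in> map h -` {w. yields P [Inl S] w} \<inter> dfa_lang \<delta> q0 F"
  then obtain f where w': "yields P [Inl S] (map h w')" "f \<in> F" "dfa_run \<delta> q0 w' = Some f"
    by (auto simp: dfa_lang_def)
  then have "mapped_run \<delta> h q0 (map h w') w' f" by (simp add: mapped_run_iff)
  from yields_triple_grammar_if_yields[OF w'(1) this q0] obtain ys where
    ys: "triple_rhs \<delta> h Q enc q0 [Inl S] ys f" "yields (triple_grammar P S \<delta> h Q enc q0 F) ys w'"
    by blast
  from ys(1) have "ys = [Inl (triple_nt enc q0 S f)]"
    by (auto elim!: triple_rhs.cases)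
  with w'(2) have "(0, ys) \<in> triple_grammar P S \<delta> h Q enc q0 F"
    by (auto simp: triple_grammar_start_rule)
  with ys(2) show "w' \<in> {w'. yields (triple_grammar P S \<delta> h Q enc q0 F) [Inl 0] w'}"
    unfolding mem_Collect_eq yields_single_Inl_iff by blast
qed

end

lemma context_free_preimage_Int_dfa_lang:
  fixes h :: "'s \<Rightarrow> 't" and \<delta> :: "'q \<Rightarrow> 's \<Rightarrow> 'q option"
  assumes "context_free L" and "finite Q" and "finite Sig" and "q0 \<in> Q" and "F \<subseteq> Q"
    and "\<And>r s r'. \<delta> r s = Some r' \<Longrightarrow> s \<in> Sig \<and> r' \<in> Q"
  shows "context_free (map h -` L \<inter> dfa_lang \<delta> q0 F)"
proof -
  from assms(1) obtain P S where P: "finite P" "cfg_lang P S = L" unfolding context_free_def by blast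
  obtain enc :: "'q \<Rightarrow> nat" where enc: "inj_on enc Q"
    using finite_imp_inj_to_nat_seg[OF \<open>finite Q\<close>] by blast
  have "finite (triple_grammar P S \<delta> h Q enc q0 F)"
    by (rule finite_triple_grammar[OF P(1) assms(2,3) enc assms(4,5)]) (fact assms(6))
  moreover have "cfg_lang (triple_grammar P S \<delta> h Q enc q0 F) 0 = map h -` L \<inter> dfa_lang \<delta> q0 F"
    unfolding cfg_lang_eq_yields P(2)[symmetric]
    by (rule lang_triple_grammar[OF P(1) assms(2,3) enc assms(4,5)]) (fact assms(6))
  ultimately show ?thesis unfolding context_free_def by blast
qed


section \<open>Product of a DPDA with a finite automaton\<close>

text \<open>On reading \<open>s\<close> the automaton moves and the DPDA reads \<open>h s\<close>; \<open>\<epsilon>\<close>-moves of the DPDA leave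
  the automaton state unchanged.\<close>

definition pair_state :: "('q \<Rightarrow> nat) \<Rightarrow> nat \<Rightarrow> 'q \<Rightarrow> nat" where
  "pair_state enc q r = prod_encode (q, enc r)"

definition product_delta ::
  "'t dpda \<Rightarrow> ('q \<Rightarrow> 's \<Rightarrow> 'q option) \<Rightarrow> ('s \<Rightarrow> 't) \<Rightarrow> 'q set \<Rightarrow> ('q \<Rightarrow> nat) \<Rightarrow>
    nat \<Rightarrow> 's option \<Rightarrow> nat \<Rightarrow> (nat \<times> nat list) option" where
  "product_delta M \<delta> h Q enc n a Z = (case prod_decode n of (q, k) \<Rightarrow>
     if k \<in> enc ` Q then
       (case a of None \<Rightarrow> map_option (\<lambda>(p, \<gamma>). (prod_encode (p, k), \<gamma>)) (delta M q None Z)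
        | Some s \<Rightarrow> (case \<delta> (inv_into Q enc k) s of None \<Rightarrow> None
            | Some r' \<Rightarrow> map_option (\<lambda>(p, \<gamma>). (prod_encode (p, enc r'), \<gamma>)) (delta M q (Some (h s)) Z)))
     else None)"

definition product_dpda ::
  "'t dpda \<Rightarrow> ('q \<Rightarrow> 's \<Rightarrow> 'q option) \<Rightarrow> ('s \<Rightarrow> 't) \<Rightarrow> 'q set \<Rightarrow> ('q \<Rightarrow> nat) \<Rightarrow> 'q \<Rightarrow> 'q set \<Rightarrow>
    's set \<Rightarrow> 's dpda" where
  "product_dpda M \<delta> h Q enc q0 F Sig = \<lparr> states = (\<lambda>(q, r). pair_state enc q r) ` (states M \<times> Q),
     inputs = Sig, stack_syms = stack_syms M, delta = product_delta M \<delta> h Q enc,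
     init_state = pair_state enc (init_state M) q0, init_stack = init_stack M,
     final = (\<lambda>(q, r). pair_state enc q r) ` (final M \<times> F) \<rparr>"

context
  fixes M :: "'t dpda" and \<delta> :: "'q \<Rightarrow> 's \<Rightarrow> 'q option" and h :: "'s \<Rightarrow> 't"
    and Q :: "'q set" and enc :: "'q \<Rightarrow> nat" and q0 :: 'q and F :: "'q set" and Sig :: "'s set"
  assumes dpda_M: "is_dpda M" and finite_Q: "finite Q" and finite_Sig: "finite Sig"
    and inj_enc: "inj_on enc Q" and q0: "q0 \<in> Q" and F: "F \<subseteq> Q"
    and \<delta>: "\<And>r s r'. \<delta> r s = Some r' \<Longrightarrow> s \<in> Sig \<and> r' \<in> Q"
begin

lemma pair_state_eq_iff:
  "r \<in> Q \<Longrightarrow> r' \<in> Q \<Longrightarrow> pair_state enc q r = pair_state enc q' r' \<longleftrightarrow> q = q' \<and> r = r'"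
  by (auto simp: pair_state_def inj_on_eq_iff[OF inj_enc])

lemma product_delta_pair_state: "r \<in> Q \<Longrightarrow> product_delta M \<delta> h Q enc (pair_state enc q r) a Z =
   (case a of None \<Rightarrow> map_option (\<lambda>(p, \<gamma>). (pair_state enc p r, \<gamma>)) (delta M q None Z)
    | Some s \<Rightarrow> (case \<delta> r s of None \<Rightarrow> None
        | Some r' \<Rightarrow> map_option (\<lambda>(p, \<gamma>). (pair_state enc p r', \<gamma>)) (delta M q (Some (h s)) Z)))"
  by (auto simp: product_delta_def pair_state_def inv_into_f_f[OF inj_enc] split: option.splits)

lemma product_delta_SomeD: "product_delta M \<delta> h Q enc n a Z = Some (p', \<gamma>) \<Longrightarrow>
   \<exists>q r. r \<in> Q \<and> n = pair_state enc q r \<and>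
     (case a of None \<Rightarrow> \<exists>p. delta M q None Z = Some (p, \<gamma>) \<and> p' = pair_state enc p r
      | Some s \<Rightarrow> \<exists>r' p. \<delta> r s = Some r' \<and> delta M q (Some (h s)) Z = Some (p, \<gamma>) \<and> p' = pair_state enc p r')"
proof -
  assume a: "product_delta M \<delta> h Q enc n a Z = Some (p', \<gamma>)"
  obtain q k where qk: "prod_decode n = (q, k)" by (cases "prod_decode n")
  with a have "k \<in> enc ` Q" by (auto simp: product_delta_def split: if_splits)
  then obtain r where r: "r \<in> Q" "k = enc r" by blast
  have n: "n = pair_state enc q r" using qk r by (metis pair_state_def prod_decode_inverse)
  from a show ?thesis unfolding n product_delta_pair_state[OF r(1)] using r(1)
    by (intro exI[of _ q] exI[of _ r]) (auto split: option.splits)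
qed

lemma product_delta_SomeE:
  assumes "product_delta M \<delta> h Q enc n a Z = Some (p', \<gamma>)"
  obtains q r p where "r \<in> Q" "n = pair_state enc q r" "a = None" "delta M q None Z = Some (p, \<gamma>)"
      "p' = pair_state enc p r"
    | q r s r' p where "r \<in> Q" "n = pair_state enc q r" "a = Some s" "\<delta> r s = Some r'"
      "delta M q (Some (h s)) Z = Some (p, \<gamma>)" "p' = pair_state enc p r'"
  using product_delta_SomeD[OF assms] by (cases a) auto

lemma product_delta_wf: "product_delta M \<delta> h Q enc n a Z = Some (p, \<gamma>) \<Longrightarrow>
    n \<in> (\<lambda>(q, r). pair_state enc q r) ` (states M \<times> Q) \<and> Z \<in> stack_syms M \<and>
    (\<forall>b. a = Some b \<longrightarrow> b \<in> Sig) \<and> p \<in> (\<lambda>(q, r). pair_state enc q r) ` (states M \<times> Q) \<and>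
    set \<gamma> \<subseteq> stack_syms M"
proof (elim product_delta_SomeE)
  have M_wf: "delta M q a Z = Some (p, \<gamma>) \<Longrightarrow> q \<in> states M \<and> Z \<in> stack_syms M \<and>
      p \<in> states M \<and> set \<gamma> \<subseteq> stack_syms M" for q a Z p \<gamma>
    using dpda_M unfolding is_dpda_def by blast
  show ?thesis if "r \<in> Q" "n = pair_state enc q r" "a = None" "delta M q None Z = Some (p0, \<gamma>)"
      "p = pair_state enc p0 r" for q r p0
    using that M_wf[OF that(4)] by auto
  show ?thesis if "r \<in> Q" "n = pair_state enc q r" "a = Some s" "\<delta> r s = Some r'"
      "delta M q (Some (h s)) Z = Some (p0, \<gamma>)" "p = pair_state enc p0 r'" for q r s r' p0
    using that M_wf[OF that(5)] \<delta>[OF that(4)] by auto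
qed

lemma product_delta_deterministic:
  "product_delta M \<delta> h Q enc n None Z \<noteq> None \<Longrightarrow> product_delta M \<delta> h Q enc n (Some b) Z = None"
proof -
  assume "product_delta M \<delta> h Q enc n None Z \<noteq> None"
  then obtain p \<gamma> where "product_delta M \<delta> h Q enc n None Z = Some (p, \<gamma>)" by auto
  from product_delta_SomeD[OF this] obtain q r where "r \<in> Q" "n = pair_state enc q r" "delta M q None Z \<noteq> None"
    by auto
  with dpda_M show ?thesis
    by (auto simp: product_delta_pair_state is_dpda_def split: option.splits)
qed

lemma is_dpda_product_dpda: "is_dpda (product_dpda M \<delta> h Q enc q0 F Sig)"
  using dpda_M finite_Q finite_Sig q0 F product_delta_wf product_delta_deterministic
  unfolding is_dpda_def product_dpda_def by auto

lemma product_step_projects: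
  assumes "dpda_step (product_dpda M \<delta> h Q enc q0 F Sig) (n, w, st) (n', w', st')"
  shows "\<exists>q r q' r'. r \<in> Q \<and> r' \<in> Q \<and> n = pair_state enc q r \<and> n' = pair_state enc q' r' \<and>
    dpda_step M (q, map h w, st) (q', map h w', st') \<and> (w = w' \<and> r' = r \<or> (\<exists>s. w = s # w' \<and> \<delta> r s = Some r'))"
  using assms
proof (cases rule: dpda_step.cases)
  case (eps Z \<gamma> \<beta>)
  from product_delta_SomeD[OF eps(4)[unfolded product_dpda_def, simplified]] obtain q r p0 where
    "r \<in> Q" "n = pair_state enc q r" "delta M q None Z = Some (p0, \<gamma>)" "n' = pair_state enc p0 r" by auto
  with eps show ?thesis by (intro exI[of _ q] exI[of _ r] exI[of _ p0] exI[of _ r]) (auto intro: dpda_step.eps)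
next
  case (read a Z \<gamma> \<beta>)
  from product_delta_SomeD[OF read(4)[unfolded product_dpda_def, simplified]] obtain q r r' p0 where
    "r \<in> Q" "n = pair_state enc q r" "\<delta> r a = Some r'" "delta M q (Some (h a)) Z = Some (p0, \<gamma>)"
    "n' = pair_state enc p0 r'" by auto
  with read \<delta> show ?thesis
    by (intro exI[of _ q] exI[of _ r] exI[of _ p0] exI[of _ r']) (auto intro: dpda_step.read)
qed

lemma product_run_projects:
  "(dpda_step (product_dpda M \<delta> h Q enc q0 F Sig))\<^sup>*\<^sup>* c c' \<Longrightarrow> c = (pair_state enc q r, w, st) \<Longrightarrow>
   r \<in> Q \<Longrightarrow> c' = (n', w', st') \<Longrightarrow>
   \<exists>q' r' x. r' \<in> Q \<and> n' = pair_state enc q' r' \<and> w = x @ w' \<and> dfa_run \<delta> r x = Some r' \<and>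
    (dpda_step M)\<^sup>*\<^sup>* (q, map h w, st) (q', map h w', st')"
proof (induction arbitrary: n' w' st' rule: rtranclp_induct)
  case base then show ?case by (intro exI[of _ q] exI[of _ r] exI[of _ "[]"]) auto
next
  case (step y z)
  obtain n1 w1 st1 where y: "y = (n1, w1, st1)" by (cases y)
  from step.IH[OF step.prems(1,2) y] obtain q1 r1 x where
    run: "r1 \<in> Q" "n1 = pair_state enc q1 r1" "w = x @ w1" "dfa_run \<delta> r x = Some r1"
    "(dpda_step M)\<^sup>*\<^sup>* (q, map h w, st) (q1, map h w1, st1)" by blast
  from product_step_projects[OF step.hyps(2)[unfolded y step.prems(3)]] obtain qa ra q' r' where
    last: "ra \<in> Q" "r' \<in> Q" "n1 = pair_state enc qa ra" "n' = pair_state enc q' r'"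
    "dpda_step M (qa, map h w1, st1) (q', map h w', st')"
    "w1 = w' \<and> r' = ra \<or> (\<exists>s. w1 = s # w' \<and> \<delta> ra s = Some r')"
    by blast
  from last(3) run(2) have "qa = q1 \<and> ra = r1" using pair_state_eq_iff last(1) run(1) by metis
  with last run show ?case
    by (intro exI[of _ q'] exI[of _ r'] exI[of _ "x @ (if w1 = w' then [] else [hd w1])"])
      (auto simp: dfa_run_append intro: rtranclp.rtrancl_into_rtrancl)
qed

lemma dpda_step_lifts:
  assumes "dpda_step M (q, map h w, st) (q', V, st')" "r \<in> Q" "dfa_run \<delta> r w \<noteq> None"
  shows "\<exists>w' r'. r' \<in> Q \<and> V = map h w' \<and>
    dpda_step (product_dpda M \<delta> h Q enc q0 F Sig) (pair_state enc q r, w, st) (pair_state enc q' r', w', st') \<and>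
    (w = w' \<and> r' = r \<or> (\<exists>s. w = s # w' \<and> \<delta> r s = Some r'))"
  using assms(1)
proof (cases rule: dpda_step.cases)
  case (eps Z \<gamma> \<beta>)
  then have "product_delta M \<delta> h Q enc (pair_state enc q r) None Z = Some (pair_state enc q' r, \<gamma>)"
    by (simp add: product_delta_pair_state[OF \<open>r \<in> Q\<close>])
  then have "dpda_step (product_dpda M \<delta> h Q enc q0 F Sig)
      (pair_state enc q r, w, Z # \<beta>) (pair_state enc q' r, w, \<gamma> @ \<beta>)"
    by (intro dpda_step.eps) (simp add: product_dpda_def)
  with eps \<open>r \<in> Q\<close> show ?thesis by (intro exI[of _ w] exI[of _ r]) auto
next
  case (read a Z \<gamma> \<beta>)
  from read(1) obtain s w' where sw: "w = s # w'" "h s = a" "map h w' = V" by (cases w) auto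
  from assms(3) sw obtain r' where r': "\<delta> r s = Some r'" by (auto split: option.splits)
  with \<delta> have "r' \<in> Q" by blast
  from read sw r' have "product_delta M \<delta> h Q enc (pair_state enc q r) (Some s) Z = Some (pair_state enc q' r', \<gamma>)"
    by (simp add: product_delta_pair_state[OF \<open>r \<in> Q\<close>])
  then have "dpda_step (product_dpda M \<delta> h Q enc q0 F Sig)
      (pair_state enc q r, s # w', Z # \<beta>) (pair_state enc q' r', w', \<gamma> @ \<beta>)"
    by (intro dpda_step.read) (simp add: product_dpda_def)
  with read sw r' \<open>r' \<in> Q\<close> show ?thesis by (intro exI[of _ w'] exI[of _ r']) auto
qed

lemma dpda_run_lifts:
  "(dpda_step M)\<^sup>*\<^sup>* c c' \<Longrightarrow> c = (q, map h w, st) \<Longrightarrow> r \<in> Q \<Longrightarrow> dfa_run \<delta> r w \<noteq> None \<Longrightarrow>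
   c' = (q', V, st') \<Longrightarrow>
   \<exists>x w'' r'. r' \<in> Q \<and> w = x @ w'' \<and> V = map h w'' \<and> dfa_run \<delta> r x = Some r' \<and>
    (dpda_step (product_dpda M \<delta> h Q enc q0 F Sig))\<^sup>*\<^sup>* (pair_state enc q r, w, st) (pair_state enc q' r', w'', st')"
proof (induction arbitrary: q' V st' rule: rtranclp_induct)
  case base then show ?case by (intro exI[of _ "[]"] exI[of _ w] exI[of _ r]) auto
next
  case (step y z)
  obtain q1 V1 st1 where y: "y = (q1, V1, st1)" by (cases y)
  from step.IH[OF step.prems(1,2,3) y] obtain x w1 r1 where
    run: "r1 \<in> Q" "w = x @ w1" "V1 = map h w1" "dfa_run \<delta> r x = Some r1"
    "(dpda_step (product_dpda M \<delta> h Q enc q0 F Sig))\<^sup>*\<^sup>* (pair_state enc q r, w, st) (pair_state enc q1 r1, w1, st1)"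
    by blast
  have "dfa_run \<delta> r1 w1 \<noteq> None" using step.prems(3) run(2,4) by (simp add: dfa_run_append)
  from dpda_step_lifts[OF step.hyps(2)[unfolded y step.prems(4) run(3)] run(1) this] obtain w' r' where
    last: "r' \<in> Q" "V = map h w'"
    "dpda_step (product_dpda M \<delta> h Q enc q0 F Sig) (pair_state enc q1 r1, w1, st1) (pair_state enc q' r', w', st')"
    "w1 = w' \<and> r' = r1 \<or> (\<exists>s. w1 = s # w' \<and> \<delta> r1 s = Some r')" by blast
  from last run show ?case
    by (intro exI[of _ "x @ (if w1 = w' then [] else [hd w1])"] exI[of _ w'] exI[of _ r'])
      (auto simp: dfa_run_append intro: rtranclp.rtrancl_into_rtrancl)
qed

lemma dpda_lang_product_dpda:
  "dpda_lang (product_dpda M \<delta> h Q enc q0 F Sig) = map h -` dpda_lang M \<inter> dfa_lang \<delta> q0 F"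
proof (intro equalityI subsetI)
  fix w assume "w \<in> dpda_lang (product_dpda M \<delta> h Q enc q0 F Sig)"
  then obtain f \<beta> where f: "f \<in> final (product_dpda M \<delta> h Q enc q0 F Sig)"
    "(dpda_step (product_dpda M \<delta> h Q enc q0 F Sig))\<^sup>*\<^sup>* (pair_state enc (init_state M) q0, w, [init_stack M]) (f, [], \<beta>)"
    unfolding dpda_lang_def by (auto simp: product_dpda_def)
  from f(1) obtain qf rf where qf: "qf \<in> final M" "rf \<in> F" "f = pair_state enc qf rf"
    by (auto simp: product_dpda_def)
  from product_run_projects[OF f(2) HOL.refl q0 HOL.refl] obtain q' r' where
    run: "r' \<in> Q" "f = pair_state enc q' r'" "dfa_run \<delta> q0 w = Some r'"
      "(dpda_step M)\<^sup>*\<^sup>* (init_state M, map h w, [init_stack M]) (q', [], \<beta>)"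
    by auto
  from run(2) qf(3) have "q' = qf \<and> r' = rf" using pair_state_eq_iff run(1) qf(2) F by blast
  with run qf show "w \<in> map h -` dpda_lang M \<inter> dfa_lang \<delta> q0 F"
    unfolding dpda_lang_def dfa_lang_def by auto
next
  fix w assume "w \<in> map h -` dpda_lang M \<inter> dfa_lang \<delta> q0 F"
  then obtain f qf \<beta> where w: "f \<in> F" "dfa_run \<delta> q0 w = Some f" "qf \<in> final M"
    "(dpda_step M)\<^sup>*\<^sup>* (init_state M, map h w, [init_stack M]) (qf, [], \<beta>)"
    unfolding dpda_lang_def dfa_lang_def by blast
  from dpda_run_lifts[OF w(4) HOL.refl q0 _ HOL.refl] w(2) obtain x w'' r' where
    run: "w = x @ w''" "[] = map h w''" "dfa_run \<delta> q0 x = Some r'"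
    "(dpda_step (product_dpda M \<delta> h Q enc q0 F Sig))\<^sup>*\<^sup>*
       (pair_state enc (init_state M) q0, w, [init_stack M]) (pair_state enc qf r', w'', \<beta>)" by auto
  from run w(2) have "r' = f" by simp
  with run w show "w \<in> dpda_lang (product_dpda M \<delta> h Q enc q0 F Sig)"
    unfolding dpda_lang_def by (auto simp: product_dpda_def)
qed

end

lemma det_context_free_preimage_Int_dfa_lang:
  fixes h :: "'s \<Rightarrow> 't" and \<delta> :: "'q \<Rightarrow> 's \<Rightarrow> 'q option"
  assumes "det_context_free L" and "finite Q" and "finite Sig" and "q0 \<in> Q" and "F \<subseteq> Q"
    and "\<And>r s r'. \<delta> r s = Some r' \<Longrightarrow> s \<in> Sig \<and> r' \<in> Q"
  shows "det_context_free (map h -` L \<inter> dfa_lang \<delta> q0 F)"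
proof -
  from assms(1) obtain M where M: "is_dpda M" "dpda_lang M = L" unfolding det_context_free_def by blast
  obtain enc :: "'q \<Rightarrow> nat" where enc: "inj_on enc Q"
    using finite_imp_inj_to_nat_seg[OF \<open>finite Q\<close>] by blast
  have "is_dpda (product_dpda M \<delta> h Q enc q0 F Sig)"
    by (rule is_dpda_product_dpda[OF M(1) assms(2,3) enc assms(4,5)]) (fact assms(6))
  moreover have "dpda_lang (product_dpda M \<delta> h Q enc q0 F Sig) = map h -` L \<inter> dfa_lang \<delta> q0 F"
    unfolding M(2)[symmetric]
    by (rule dpda_lang_product_dpda[OF M(1) assms(2,3) enc assms(4,5)]) (fact assms(6))
  ultimately show ?thesis unfolding det_context_free_def by blast
qed


section \<open>Words over a direct product\<close>

lemma semigroup_on_mult_closed: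
  "semigroup_on G \<Longrightarrow> x \<in> carrier G \<Longrightarrow> y \<in> carrier G \<Longrightarrow> x \<otimes>\<^bsub>G\<^esub> y \<in> carrier G"
  unfolding semigroup_on_def by blast

lemma semigroup_on_assoc: "semigroup_on G \<Longrightarrow> x \<in> carrier G \<Longrightarrow> y \<in> carrier G \<Longrightarrow> z \<in> carrier G \<Longrightarrow>
    (x \<otimes>\<^bsub>G\<^esub> y) \<otimes>\<^bsub>G\<^esub> z = x \<otimes>\<^bsub>G\<^esub> (y \<otimes>\<^bsub>G\<^esub> z)"
  unfolding semigroup_on_def by blast

lemma wval_snoc: "xs \<noteq> [] \<Longrightarrow> wval G (xs @ [y]) = wval G xs \<otimes>\<^bsub>G\<^esub> y"
  by (cases xs) auto

lemma wval_closed: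
  assumes "semigroup_on G" "xs \<noteq> []" "set xs \<subseteq> carrier G"
  shows "wval G xs \<in> carrier G"
  using assms(2,3)
  by (induction xs rule: rev_nonempty_induct) (auto simp: wval_snoc semigroup_on_mult_closed[OF assms(1)])

lemma wval_Cons:
  assumes "semigroup_on G" "x \<in> carrier G" "xs \<noteq> []" "set xs \<subseteq> carrier G"
  shows "wval G (x # xs) = x \<otimes>\<^bsub>G\<^esub> wval G xs"
  using assms(3,4)
proof (induction xs rule: rev_nonempty_induct)
  case (snoc y xs)
  then have "wval G (x # xs @ [y]) = (x \<otimes>\<^bsub>G\<^esub> wval G xs) \<otimes>\<^bsub>G\<^esub> y"
    using wval_snoc[of "x # xs"] by simp
  also have "\<dots> = x \<otimes>\<^bsub>G\<^esub> wval G (xs @ [y])"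
    using snoc assms(1,2) by (simp add: wval_snoc wval_closed semigroup_on_assoc)
  finally show ?case .
qed simp

lemma wval_DirProd: "zs \<noteq> [] \<Longrightarrow> wval (G \<times>\<times> H) zs = (wval G (map fst zs), wval H (map snd zs))"
  by (induction zs rule: rev_nonempty_induct) (auto simp: wval_snoc mult_DirProd')

lemma decomposable_wval_length:
  assumes "semigroup_on G" "decomposable G" "x \<in> carrier G"
  shows "\<exists>xs. length xs = Suc n \<and> set xs \<subseteq> carrier G \<and> wval G xs = x"
  using assms(3)
proof (induction n arbitrary: x)
  case 0 then show ?case by (intro exI[of _ "[x]"]) auto
next
  case (Suc n)
  from Suc.prems \<open>decomposable G\<close> obtain a b where ab: "a \<in> carrier G" "b \<in> carrier G" "x = a \<otimes>\<^bsub>G\<^esub> b"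
    unfolding decomposable_def by blast
  from Suc.IH[OF ab(2)] obtain xs where xs: "length xs = Suc n" "set xs \<subseteq> carrier G" "wval G xs = b"
    by blast
  then have "wval G (a # xs) = x" using wval_Cons[OF assms(1) ab(1), of xs] ab(3) by fastforce
  with xs ab(1) show ?case by (intro exI[of _ "a # xs"]) (simp del: wval.simps)
qed

lemma generates_DirProd:
  assumes "semigroup_on H" "decomposable H" "generates G A"
  shows "generates (G \<times>\<times> H) (A \<times> carrier H)"
proof -
  have "\<exists>z. z \<noteq> [] \<and> set z \<subseteq> A \<times> carrier H \<and> wval (G \<times>\<times> H) z = (g, x)"
    if "g \<in> carrier G" "x \<in> carrier H" for g x
  proof -
    from assms(3) \<open>g \<in> carrier G\<close> obtain u where u: "u \<noteq> []" "set u \<subseteq> A" "wval G u = g"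
      unfolding generates_def by blast
    from decomposable_wval_length[OF assms(1,2) \<open>x \<in> carrier H\<close>, of "length u - 1"] u(1)
    obtain xs where xs: "length xs = length u" "set xs \<subseteq> carrier H" "wval H xs = x"
      by auto
    from u(1) xs(1) have "zip u xs \<noteq> []" by (cases u; cases xs) auto
    moreover have "set (zip u xs) \<subseteq> A \<times> carrier H"
      using u(2) xs(2) by (auto dest: set_zip_leftD set_zip_rightD)
    moreover have "wval (G \<times>\<times> H) (zip u xs) = (g, x)"
      using wval_DirProd[OF \<open>zip u xs \<noteq> []\<close>, of G H] xs(1,3) u(3) by (simp add: map_fst_zip map_snd_zip)
    ultimately show ?thesis by blast
  qed
  then show ?thesis using assms(3) unfolding generates_def by auto
qed

text \<open>A DFA over \<open>(A \<times> carrier T) \<union> {#}\<close>, the letter \<open>#\<close> being \<open>None\<close>, that reads \<open>u # v\<^sup>r\<^sup>e\<^sup>v\<close> and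
  records the \<open>T\<close>-values of \<open>u\<close> and of \<open>v\<close>; as \<open>v\<close> arrives reversed, its value is accumulated by
  multiplication on the left.\<close>

datatype 'b wp_state = Start | Before 'b | At 'b | After 'b 'b

fun wp_check :: "('b, 'n) monoid_scheme \<Rightarrow> 'a set \<Rightarrow> 'b wp_state \<Rightarrow> ('a \<times> 'b) option \<Rightarrow> 'b wp_state option"
  where
  "wp_check T A Start (Some (a, t)) = (if a \<in> A \<and> t \<in> carrier T then Some (Before t) else None)"
| "wp_check T A (Before x) (Some (a, t)) =
    (if x \<in> carrier T \<and> a \<in> A \<and> t \<in> carrier T then Some (Before (x \<otimes>\<^bsub>T\<^esub> t)) else None)"
| "wp_check T A (Before x) None = (if x \<in> carrier T then Some (At x) else None)"
| "wp_check T A (At x) (Some (a, t)) =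
    (if x \<in> carrier T \<and> a \<in> A \<and> t \<in> carrier T then Some (After x t) else None)"
| "wp_check T A (After x y) (Some (a, t)) =
    (if x \<in> carrier T \<and> y \<in> carrier T \<and> a \<in> A \<and> t \<in> carrier T then Some (After x (t \<otimes>\<^bsub>T\<^esub> y)) else None)"
| "wp_check T A _ _ = None"

definition wp_states :: "('b, 'n) monoid_scheme \<Rightarrow> 'b wp_state set" where
  "wp_states T = {Start} \<union> Before ` carrier T \<union> At ` carrier T \<union> (\<lambda>(x, y). After x y) ` (carrier T \<times> carrier T)"

definition wp_alphabet :: "('b, 'n) monoid_scheme \<Rightarrow> 'a set \<Rightarrow> ('a \<times> 'b) option set" where
  "wp_alphabet T A = {None} \<union> Some ` (A \<times> carrier T)"

definition wp_final :: "('b, 'n) monoid_scheme \<Rightarrow> 'b wp_state set" where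
  "wp_final T = (\<lambda>x. After x x) ` carrier T"

lemma wp_check_closed:
  "semigroup_on T \<Longrightarrow> wp_check T A r s = Some r' \<Longrightarrow> s \<in> wp_alphabet T A \<and> r' \<in> wp_states T"
  by (induction T A r s rule: wp_check.induct)
    (auto simp: wp_alphabet_def wp_states_def semigroup_on_mult_closed split: if_splits)

lemma dfa_run_wp_check_left:
  assumes "semigroup_on T" "z \<noteq> []" "set z \<subseteq> A \<times> carrier T"
  shows "dfa_run (wp_check T A) Start (map Some z) = Some (Before (wval T (map snd z)))"
  using assms(2,3)
proof (induction z rule: rev_nonempty_induct)
  case (snoc a z)
  moreover have "wval T (map snd z) \<in> carrier T"
    using snoc assms(1) by (intro wval_closed) auto
  ultimately show ?case by (cases a) (auto simp: dfa_run_append wval_snoc)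
qed auto

lemma dfa_run_wp_check_right:
  assumes "semigroup_on T" "x \<in> carrier T" "z \<noteq> []" "set z \<subseteq> A \<times> carrier T"
  shows "dfa_run (wp_check T A) (At x) (map Some (rev z)) = Some (After x (wval T (map snd z)))"
  using assms(3,4)
proof (induction z rule: list_nonempty_induct)
  case (cons a z)
  obtain b t where a: "a = (b, t)" by (cases a)
  have "set (map snd z) \<subseteq> carrier T" "t \<in> carrier T" "b \<in> A" using cons.prems a by auto
  then have "wval T (map snd z) \<in> carrier T" "wval T (t # map snd z) = t \<otimes>\<^bsub>T\<^esub> wval T (map snd z)"
    using cons.hyps(1) wval_closed[OF assms(1)] wval_Cons[OF assms(1)] by auto
  with cons a assms(2) show ?case by (auto simp: dfa_run_append simp del: wval.simps)
qed (use assms(2) in auto)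

lemma map_map_option_eq_map_Some:
  "map (map_option f) xs = map Some ys \<Longrightarrow> \<exists>zs. xs = map Some zs \<and> map f zs = ys"
  by (induction xs arbitrary: ys) (auto simp: Cons_eq_map_conv)

lemma WP_DirProd_eq:
  assumes "semigroup_on T"
  shows "WP (S \<times>\<times> T) (A \<times> carrier T) =
    map (map_option fst) -` WP S A \<inter> dfa_lang (wp_check T A) Start (wp_final T)"
proof (intro equalityI subsetI)
  fix w assume "w \<in> WP (S \<times>\<times> T) (A \<times> carrier T)"
  then obtain z z' where z: "w = map Some z @ [None] @ map Some (rev z')" "z \<noteq> []" "z' \<noteq> []"
    "set z \<subseteq> A \<times> carrier T" "set z' \<subseteq> A \<times> carrier T" "wval (S \<times>\<times> T) z = wval (S \<times>\<times> T) z'"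
    unfolding WP_def by blast
  from z(6) have eq: "wval S (map fst z) = wval S (map fst z')" "wval T (map snd z) = wval T (map snd z')"
    using wval_DirProd[OF z(2), of S T] wval_DirProd[OF z(3), of S T] by auto
  have "map (map_option fst) w = map Some (map fst z) @ [None] @ map Some (rev (map fst z'))"
    using z(1) by (simp add: rev_map)
  with z(2-5) eq(1) have "map (map_option fst) w \<in> WP S A"
    unfolding WP_def by (intro CollectI exI[of _ "map fst z"] exI[of _ "map fst z'"]) auto
  moreover define x where "x = wval T (map snd z)"
  have x: "x \<in> carrier T" unfolding x_def using z(2,4) assms by (intro wval_closed) auto
  have "dfa_run (wp_check T A) Start w = Some (After x x)"
    using z(1) dfa_run_wp_check_left[OF assms z(2,4)] dfa_run_wp_check_right[OF assms x z(3,5)] x eq(2)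
    by (simp add: dfa_run_append x_def)
  moreover have "After x x \<in> wp_final T" using x unfolding wp_final_def by auto
  ultimately show "w \<in> map (map_option fst) -` WP S A \<inter> dfa_lang (wp_check T A) Start (wp_final T)"
    unfolding dfa_lang_def by auto
next
  fix w assume "w \<in> map (map_option fst) -` WP S A \<inter> dfa_lang (wp_check T A) Start (wp_final T)"
  then obtain u v f where uv: "map (map_option fst) w = map Some u @ [None] @ map Some (rev v)"
    "u \<noteq> []" "v \<noteq> []" "set u \<subseteq> A" "set v \<subseteq> A" "wval S u = wval S v"
    and f: "f \<in> wp_final T" "dfa_run (wp_check T A) Start w = Some f"
    unfolding WP_def dfa_lang_def by blast
  from uv(1) obtain w1 b w2 where w: "w = w1 @ b # w2" "map (map_option fst) w1 = map Some u"
    "map_option fst b = None" "map (map_option fst) w2 = map Some (rev v)"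
    by (auto simp: map_eq_append_conv map_eq_Cons_conv)
  from map_map_option_eq_map_Some[OF w(2)] map_map_option_eq_map_Some[OF w(4)]
  obtain z z' where z: "w = map Some z @ [None] @ map Some (rev z')" "map fst z = u" "map fst z' = v"
    using w(1,3) by (metis append_Cons append_Nil option.map_disc_iff rev_map rev_rev_ident)
  have "set w \<subseteq> wp_alphabet T A"
    using set_subset_if_dfa_run[OF _ f(2)] wp_check_closed[OF assms] by blast
  then have zA: "set z \<subseteq> A \<times> carrier T" "set z' \<subseteq> A \<times> carrier T"
    using z(1) by (auto simp: wp_alphabet_def)
  have z_ne: "z \<noteq> []" "z' \<noteq> []" using uv(2,3) z(2,3) by auto
  define x where "x = wval T (map snd z)"
  have x: "x \<in> carrier T" unfolding x_def using z_ne zA assms by (intro wval_closed) auto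
  have "dfa_run (wp_check T A) Start w = Some (After x (wval T (map snd z')))"
    using z(1) dfa_run_wp_check_left[OF assms z_ne(1) zA(1)] dfa_run_wp_check_right[OF assms x z_ne(2) zA(2)] x
    by (simp add: dfa_run_append x_def)
  with f have "x = wval T (map snd z')" unfolding wp_final_def by auto
  then have "wval (S \<times>\<times> T) z = wval (S \<times>\<times> T) z'"
    using wval_DirProd[OF z_ne(1), of S T] wval_DirProd[OF z_ne(2), of S T] uv(6) z(2,3) x_def by simp
  with z(1) z_ne zA show "w \<in> WP (S \<times>\<times> T) (A \<times> carrier T)"
    unfolding WP_def by blast
qed


theorem mainTheorem4:
  fixes S :: "('a, 'm) monoid_scheme" and T :: "('b, 'n) monoid_scheme"
  assumes "semigroup_on S" and "semigroup_on T"
    and "finite (carrier T)" and "decomposable T"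
  shows "(U_CF S \<longrightarrow> U_CF (S \<times>\<times> T)) \<and> (U_DCF S \<longrightarrow> U_DCF (S \<times>\<times> T))"
proof -
  have automaton: "finite (wp_states T)" "finite (wp_alphabet T A)" "Start \<in> wp_states T"
    "wp_final T \<subseteq> wp_states T" if "finite A" for A :: "'a set"
    using that assms(3) by (auto simp: wp_states_def wp_alphabet_def wp_final_def)
  have generators: "finite (A \<times> carrier T)" "generates (S \<times>\<times> T) (A \<times> carrier T)"
    if "finite A" "generates S A" for A
    using that assms(3) generates_DirProd[OF assms(2,4)] by auto
  have "U_CF (S \<times>\<times> T)" if "U_CF S"
  proof -
    from that obtain A where A: "finite A" "generates S A" "context_free (WP S A)" unfolding U_CF_def by blast
    have "context_free (WP (S \<times>\<times> T) (A \<times> carrier T))"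
      unfolding WP_DirProd_eq[OF assms(2)]
      by (rule context_free_preimage_Int_dfa_lang[OF A(3) automaton[OF A(1)]])
        (erule wp_check_closed[OF assms(2)])
    with generators[OF A(1,2)] show ?thesis unfolding U_CF_def by blast
  qed
  moreover have "U_DCF (S \<times>\<times> T)" if "U_DCF S"
  proof -
    from that obtain A where A: "finite A" "generates S A" "det_context_free (WP S A)" unfolding U_DCF_def by blast
    have "det_context_free (WP (S \<times>\<times> T) (A \<times> carrier T))"
      unfolding WP_DirProd_eq[OF assms(2)]
      by (rule det_context_free_preimage_Int_dfa_lang[OF A(3) automaton[OF A(1)]])
        (erule wp_check_closed[OF assms(2)])
    with generators[OF A(1,2)] show ?thesis unfolding U_DCF_def by blast
  qed
  ultimately show ?thesis by blast
qed

end
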